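(* Let $n \ge m \ge 2$ be integers and let $K_{n,m}$ be the complete bipartite graph with parts of sizes $n$ and $m$. (i) If $n$ is even, then $\mathrm{sg_e}(K_{n,m}) = n+1$ if $n=m$, and $\mathrm{sg_e}(K_{n,m}) = n$ if $n \ge m+1$. (ii) If $n$ is odd, then $\mathrm{sg_e}(K_{n,m}) = n+2$ if $n=m$, $\mathrm{sg_e}(K_{n,m}) = n+1$ if $n=m+1$, and $\mathrm{sg_e}(K_{n,m}) = n$ if $n \ge m+2$.
   Context: All graphs are finite, simple and connected. A set $S \subseteq V(G)$ is a strong edge geodetic set of $G$ if one can assign to every unordered pair $\{u,v\}$ of distinct vertices of $S$ either one shortest $u,v$-path $P_{uv}$ in $G$ or no path, in such a way that every edge of $G$ lies on at least one of the assigned paths. The strong edge geodetic number $\mathrm{sg_e}(G)$ is the minimum cardinality of a strong edge geodetic set of $G$. *)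

theory Defs
  imports Main
begin

definition simple_graph :: "'a set \<Rightarrow> 'a set set \<Rightarrow> bool" where
  "simple_graph V E \<longleftrightarrow> finite V \<and> (\<forall>e\<in>E. \<exists>u v. u \<in> V \<and> v \<in> V \<and> u \<noteq> v \<and> e = {u, v})"

definition is_path :: "'a set \<Rightarrow> 'a set set \<Rightarrow> 'a list \<Rightarrow> 'a \<Rightarrow> 'a \<Rightarrow> bool" where
  "is_path V E p u v \<longleftrightarrow> p \<noteq> [] \<and> hd p = u \<and> last p = v \<and> distinct p \<and> set p \<subseteq> V \<and>
     (\<forall>i. Suc i < length p \<longrightarrow> {p ! i, p ! Suc i} \<in> E)"

definition path_edges :: "'a list \<Rightarrow> 'a set set" where
  "path_edges p = {{p ! i, p ! Suc i} | i. Suc i < length p}"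

definition connected_graph :: "'a set \<Rightarrow> 'a set set \<Rightarrow> bool" where
  "connected_graph V E \<longleftrightarrow> V \<noteq> {} \<and> (\<forall>u\<in>V. \<forall>v\<in>V. \<exists>p. is_path V E p u v)"

definition gdist :: "'a set \<Rightarrow> 'a set set \<Rightarrow> 'a \<Rightarrow> 'a \<Rightarrow> nat" where
  "gdist V E u v = (LEAST k. \<exists>p. is_path V E p u v \<and> length p = Suc k)"

definition shortest_path :: "'a set \<Rightarrow> 'a set set \<Rightarrow> 'a list \<Rightarrow> 'a \<Rightarrow> 'a \<Rightarrow> bool" where
  "shortest_path V E p u v \<longleftrightarrow> is_path V E p u v \<and> length p = Suc (gdist V E u v)"

text \<open>S is a strong edge geodetic set: to every unordered pair {u,v} of distinct
  vertices of S we assign either one shortest u,v-path or none, so that every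
  edge lies on an assigned path.\<close>
definition strong_edge_geodetic :: "'a set \<Rightarrow> 'a set set \<Rightarrow> 'a set \<Rightarrow> bool" where
  "strong_edge_geodetic V E S \<longleftrightarrow> S \<subseteq> V \<and>
     (\<exists>f :: 'a set \<Rightarrow> 'a list option.
        (\<forall>u\<in>S. \<forall>v\<in>S. \<forall>p. u \<noteq> v \<and> f {u, v} = Some p \<longrightarrow>
              shortest_path V E p u v \<or> shortest_path V E p v u) \<and>
        (\<forall>e\<in>E. \<exists>u\<in>S. \<exists>v\<in>S. \<exists>p. u \<noteq> v \<and> f {u, v} = Some p \<and> e \<in> path_edges p))"

definition sge_number :: "'a set \<Rightarrow> 'a set set \<Rightarrow> nat" where
  "sge_number V E = Min (card ` {S. strong_edge_geodetic V E S})"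

definition Kbip_V :: "nat \<Rightarrow> nat \<Rightarrow> (nat + nat) set" where
  "Kbip_V n m = Inl ` {..<n} \<union> Inr ` {..<m}"

definition Kbip_E :: "nat \<Rightarrow> nat \<Rightarrow> (nat + nat) set set" where
  "Kbip_E n m = {{Inl i, Inr j} | i j. i < n \<and> j < m}"

end

theory Submission
  imports Defs
begin

text \<open>All geodesics of \<open>K\<^sub>n\<^sub>,\<^sub>m\<close> have length at most 2, so every edge on an assigned
  geodesic has an endpoint in \<open>S\<close>; hence \<open>S\<close> contains a whole side \<open>X\<close>. An edge \<open>xy\<close> with
  \<open>y \<notin> S\<close> can then only be covered by a path \<open>x y x'\<close> assigned to a pair \<open>{x, x'}\<subseteq> X\<close>, so
  every missing \<open>y\<close> is the midpoint of at least \<open>\<lceil>|X|/2\<rceil>\<close> of the \<open>|X| choose 2\<close> pairs,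
  and distinct \<open>y\<close> use distinct pairs. Thus at most the largest odd number \<open>q < |X|\<close> of
  vertices are missing. Conversely, \<open>q\<close> right vertices can be dropped: colour the pairs of
  left vertices so that each of the \<open>q\<close> colour classes covers all left vertices, and route
  every pair through the right vertex of its colour.\<close>

lemma path_edges_two: "path_edges [a, b] = {{a, b}}"
  by (auto simp: path_edges_def)

lemma path_edges_three: "path_edges [a, b, c] = {{a, b}, {b, c}}"
proof -
  have "{i. Suc i < length [a, b, c]} = {0, 1}" by auto
  then show ?thesis unfolding path_edges_def by (auto simp: setcompr_eq_image)
qed

lemma is_path_length_1: "is_path V E p u v \<Longrightarrow> length p = 1 \<Longrightarrow> u = v"
  by (cases p) (auto simp: is_path_def)

lemma is_path_length_2: "is_path V E p u v \<Longrightarrow> length p = 2 \<Longrightarrow> p = [u, v] \<and> {u, v} \<in> E"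
  by (cases p; cases "tl p") (auto simp: is_path_def)

lemma is_path_length_3:
  assumes "is_path V E p u v" "length p = 3"
  shows "\<exists>w. p = [u, w, v] \<and> {u, w} \<in> E \<and> {w, v} \<in> E \<and> distinct [u, w, v]"
proof -
  obtain x y z where p: "p = [x, y, z]"
    using assms(2) by (cases p; cases "tl p"; cases "tl (tl p)") auto
  have edges: "\<forall>i. Suc i < length p \<longrightarrow> {p ! i, p ! Suc i} \<in> E"
    using assms(1) by (simp add: is_path_def)
  have "{x, y} \<in> E" "{y, z} \<in> E"
    using edges[rule_format, of 0] edges[rule_format, of 1] p by auto
  then show ?thesis using assms(1) p by (auto simp: is_path_def)
qed

lemma is_path_two: "a \<in> V \<Longrightarrow> b \<in> V \<Longrightarrow> a \<noteq> b \<Longrightarrow> {a, b} \<in> E \<Longrightarrow> is_path V E [a, b] a b"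
  unfolding is_path_def by (auto simp: less_Suc_eq)

lemma is_path_three:
  "a \<in> V \<Longrightarrow> b \<in> V \<Longrightarrow> c \<in> V \<Longrightarrow> distinct [a, b, c] \<Longrightarrow> {a, b} \<in> E \<Longrightarrow> {b, c} \<in> E
   \<Longrightarrow> is_path V E [a, b, c] a c"
  unfolding is_path_def by (auto simp: less_Suc_eq)

lemma gdist_le: "is_path V E p u v \<Longrightarrow> length p = Suc k \<Longrightarrow> gdist V E u v \<le> k"
  unfolding gdist_def by (rule Least_le) blast

lemma gdist_eqI:
  assumes "is_path V E p u v" "length p = Suc k"
    and "\<And>p' k'. is_path V E p' u v \<Longrightarrow> length p' = Suc k' \<Longrightarrow> k \<le> k'"
  shows "gdist V E u v = k"
  unfolding gdist_def by (rule Least_equality) (use assms in blast)+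

lemma short_path_edge_middle:
  assumes p: "is_path V E p u v" "length p \<le> 3"
    and e: "{a, b} \<in> path_edges p" and b: "b \<notin> {u, v}"
  shows "\<exists>c. {a, c} = {u, v} \<and> p ! 1 = b \<and> {b, c} \<in> E \<and> a \<noteq> c"
proof -
  have "length p = 2 \<or> length p = 3"
    using e p(2) unfolding path_edges_def by auto
  then show ?thesis
  proof
    assume "length p = 2"
    then have "{a, b} = {u, v}" using is_path_length_2[OF p(1)] e by (auto simp: path_edges_two)
    then show ?thesis using b by auto
  next
    assume "length p = 3"
    then obtain w where w: "p = [u, w, v]" "{u, w} \<in> E" "{w, v} \<in> E" "distinct [u, w, v]"
      using is_path_length_3[OF p(1)] by blast
    then have "{a, b} = {u, w} \<or> {a, b} = {w, v}" using e by (simp add: path_edges_three)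
    then have "b = w \<and> (a = u \<or> a = v)" using b by (auto simp: doubleton_eq_iff)
    then show ?thesis using w by (auto simp: insert_commute)
  qed
qed

definition geodesic_cover ::
  "'a set \<Rightarrow> 'a set set \<Rightarrow> 'a set \<Rightarrow> ('a set \<Rightarrow> 'a list option) \<Rightarrow> bool" where
  "geodesic_cover V E S f \<longleftrightarrow>
     (\<forall>u\<in>S. \<forall>v\<in>S. \<forall>p. u \<noteq> v \<and> f {u, v} = Some p \<longrightarrow>
        shortest_path V E p u v \<or> shortest_path V E p v u) \<and>
     (\<forall>e\<in>E. \<exists>u\<in>S. \<exists>v\<in>S. \<exists>p. u \<noteq> v \<and> f {u, v} = Some p \<and> e \<in> path_edges p)"

lemma strong_edge_geodetic_iff:
  "strong_edge_geodetic V E S \<longleftrightarrow> S \<subseteq> V \<and> (\<exists>f. geodesic_cover V E S f)"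
  unfolding strong_edge_geodetic_def geodesic_cover_def by blast

lemma geodesic_cover_edge_middle:
  assumes cov: "geodesic_cover V E S f" and diam: "\<forall>u\<in>S. \<forall>v\<in>S. gdist V E u v \<le> 2"
    and ab: "{a, b} \<in> E" and b: "b \<notin> S"
  shows "\<exists>c p. a \<in> S \<and> c \<noteq> a \<and> {b, c} \<in> E \<and> f {a, c} = Some p \<and> p ! 1 = b"
proof -
  obtain u v p where uv: "u \<in> S" "v \<in> S" "u \<noteq> v" "f {u, v} = Some p" "{a, b} \<in> path_edges p"
    using cov ab unfolding geodesic_cover_def by blast
  obtain x y where xy: "is_path V E p x y" "length p \<le> 3" "{x, y} = {u, v}"
  proof (cases "shortest_path V E p u v")
    case True
    then show ?thesis using that[of u v] diam uv by (auto simp: shortest_path_def)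
  next
    case False
    then have "shortest_path V E p v u" using cov uv unfolding geodesic_cover_def by blast
    then show ?thesis using that[of v u] diam uv by (auto simp: shortest_path_def insert_commute)
  qed
  moreover have "b \<notin> {x, y}" using b uv xy(3) by auto
  ultimately obtain c where "{a, c} = {u, v}" "p ! 1 = b" "{b, c} \<in> E" "a \<noteq> c"
    using short_path_edge_middle[OF xy(1,2) uv(5)] by metis
  then show ?thesis using uv by (intro exI[of _ c] exI[of _ p]) auto
qed

lemma geodesic_cover_edge_hits:
  assumes "geodesic_cover V E S f" "\<forall>u\<in>S. \<forall>v\<in>S. gdist V E u v \<le> 2" "{a, b} \<in> E"
  shows "a \<in> S \<or> b \<in> S"
  using geodesic_cover_edge_middle[OF assms] by blast

lemma card_covering_fibres_le:
  fixes mid :: "'a set \<Rightarrow> 'b"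
  assumes "finite A"
    and covers: "\<And>y x. y \<in> T \<Longrightarrow> x \<in> A \<Longrightarrow> \<exists>P\<subseteq>A. card P = 2 \<and> x \<in> P \<and> mid P = y"
  shows "card T * ((card A + 1) div 2) \<le> card A choose 2"
proof (cases "finite T")
  case True
  define Pairs where "Pairs = {P. P \<subseteq> A \<and> card P = 2}"
  define M where "M y = {P \<in> Pairs. mid P = y}" for y
  have "finite Pairs" using assms(1) by (simp add: Pairs_def)
  then have finM: "finite (M y)" for y by (simp add: M_def)
  have fibre: "(card A + 1) div 2 \<le> card (M y)" if "y \<in> T" for y
  proof -
    have "A \<subseteq> \<Union>(M y)" using covers[OF that] by (auto simp: M_def Pairs_def)
    then have "card A \<le> card (\<Union>(M y))"
      by (rule card_mono[rotated]) (use finM assms(1) in \<open>auto simp: M_def Pairs_def intro: finite_subset\<close>)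
    also have "\<dots> \<le> (\<Sum>P\<in>M y. card P)" by (rule card_Union_le_sum_card)
    also have "\<dots> = 2 * card (M y)" by (simp add: M_def Pairs_def)
    finally show ?thesis by linarith
  qed
  have "card T * ((card A + 1) div 2) \<le> (\<Sum>y\<in>T. card (M y))"
    using sum_bounded_below[of T "(card A + 1) div 2" "\<lambda>y. card (M y)"] fibre
    by (simp add: mult.commute)
  also have "\<dots> = card (\<Union>(M ` T))"
    by (rule card_UN_disjoint[symmetric]) (use True finM in \<open>auto simp: M_def\<close>)
  also have "\<dots> \<le> card Pairs"
    by (rule card_mono[OF \<open>finite Pairs\<close>]) (auto simp: M_def)
  also have "\<dots> = card A choose 2"
    using n_subsets[OF assms(1)] by (simp add: Pairs_def)
  finally show ?thesis .
qed simp

lemma geodesic_cover_middle_count: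
  assumes cov: "geodesic_cover V E S f" and diam: "\<forall>u\<in>S. \<forall>v\<in>S. gdist V E u v \<le> 2"
    and "finite A" and T: "T \<inter> S = {}"
    and edges: "\<And>a b. a \<in> A \<Longrightarrow> b \<in> T \<Longrightarrow> {a, b} \<in> E"
    and neighbours: "\<And>b c. b \<in> T \<Longrightarrow> {b, c} \<in> E \<Longrightarrow> c \<in> A"
  shows "card T * ((card A + 1) div 2) \<le> card A choose 2"
proof (rule card_covering_fibres_le[OF \<open>finite A\<close>])
  fix y x assume y: "y \<in> T" and x: "x \<in> A"
  then obtain c p where c: "c \<noteq> x" "{y, c} \<in> E" "f {x, c} = Some p" "p ! 1 = y"
    using geodesic_cover_edge_middle[OF cov diam edges[OF x y]] T by blast
  then show "\<exists>P\<subseteq>A. card P = 2 \<and> x \<in> P \<and> (case f P of Some p \<Rightarrow> p ! 1 | None \<Rightarrow> undefined) = y"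
    using neighbours[OF y c(2)] x by (intro exI[of _ "{x, c}"]) auto
qed

definition odd_below :: "nat \<Rightarrow> nat" where
  "odd_below n = 2 * (n div 2) - 1"

lemma odd_below_even: "even n \<Longrightarrow> odd_below n = n - 1"
  unfolding odd_below_def by simp

lemma odd_below_odd: "odd n \<Longrightarrow> odd_below n = n - 2"
  unfolding odd_below_def by presburger

lemma le_odd_below:
  assumes "1 \<le> k" "t * ((k + 1) div 2) \<le> k choose 2"
  shows "t \<le> odd_below k"
proof (cases "even k")
  case True
  then obtain j where k: "k = 2 * j" by blast
  have "t * j \<le> (2 * j - 1) * j" using assms(2) unfolding k choose_two by (simp add: mult.commute)
  then show ?thesis using k assms(1) by (simp add: odd_below_even)
next
  case False
  then obtain j where k: "k = 2 * j + 1" using oddE by blast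
  have bound: "t * (j + 1) \<le> (2 * j + 1) * j"
    using assms(2) unfolding k choose_two by (simp add: mult.commute)
  have "t \<le> 2 * j - 1"
  proof (rule ccontr)
    assume "\<not> t \<le> 2 * j - 1"
    then have "2 * j \<le> t" "0 < t" by auto
    then have "2 * j * (j + 1) \<le> (2 * j + 1) * j" using bound mult_right_mono order_trans by blast
    then have "j = 0" by (simp add: algebra_simps)
    then show False using bound \<open>0 < t\<close> by simp
  qed
  then show ?thesis using k by (simp add: odd_below_odd)
qed

lemma odd_below_mono: "m \<le> n \<Longrightarrow> odd_below m \<le> odd_below n"
  unfolding odd_below_def by (simp add: diff_le_mono div_le_mono)

lemma odd_below_le: "odd_below n \<le> n"
  unfolding odd_below_def by simp

lemma Kbip_V_iff [simp]: "Inl i \<in> Kbip_V n m \<longleftrightarrow> i < n" "Inr j \<in> Kbip_V n m \<longleftrightarrow> j < m"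
  by (auto simp: Kbip_V_def)

lemma finite_Kbip_V: "finite (Kbip_V n m)"
  by (simp add: Kbip_V_def)

lemma card_Kbip_V: "card (Kbip_V n m) = n + m"
  unfolding Kbip_V_def by (subst card_Un_disjoint) (auto simp: card_image)

lemma Kbip_E_Inl_Inr_iff [simp]: "{Inl i, Inr j} \<in> Kbip_E n m \<longleftrightarrow> i < n \<and> j < m"
  by (auto simp: Kbip_E_def doubleton_eq_iff)

lemma Kbip_E_Inl_Inl: "{Inl i, Inl j} \<notin> Kbip_E n m"
  by (auto simp: Kbip_E_def doubleton_eq_iff)

lemma Kbip_E_Inl: "{Inl i, c} \<in> Kbip_E n m \<Longrightarrow> \<exists>j<m. c = Inr j"
  by (auto simp: Kbip_E_def doubleton_eq_iff)

lemma Kbip_E_Inr: "{Inr j, c} \<in> Kbip_E n m \<Longrightarrow> \<exists>i<n. c = Inl i"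
  by (auto simp: Kbip_E_def doubleton_eq_iff)

lemma Kbip_gdist_le_2:
  assumes "1 \<le> n" "1 \<le> m" "u \<in> Kbip_V n m" "v \<in> Kbip_V n m"
  shows "gdist (Kbip_V n m) (Kbip_E n m) u v \<le> 2"
proof -
  have "\<exists>p. is_path (Kbip_V n m) (Kbip_E n m) p u v \<and> length p \<le> 3"
  proof (cases "u = v")
    case True
    then show ?thesis using assms by (intro exI[of _ "[u]"]) (auto simp: is_path_def)
  next
    case False
    show ?thesis
    proof (cases u; cases v)
      fix i j assume "u = Inl i" "v = Inl j"
      then show ?thesis using False assms
        by (intro exI[of _ "[Inl i, Inr 0, Inl j]"]) (auto intro!: is_path_three simp: insert_commute)
    next
      fix i j assume "u = Inl i" "v = Inr j"
      then show ?thesis using assms by (intro exI[of _ "[u, v]"]) (auto intro!: is_path_two)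
    next
      fix i j assume "u = Inr i" "v = Inl j"
      then show ?thesis using assms
        by (intro exI[of _ "[u, v]"]) (auto intro!: is_path_two simp: insert_commute)
    next
      fix i j assume "u = Inr i" "v = Inr j"
      then show ?thesis using False assms
        by (intro exI[of _ "[Inr i, Inl 0, Inr j]"]) (auto intro!: is_path_three simp: insert_commute)
    qed
  qed
  then obtain p where "is_path (Kbip_V n m) (Kbip_E n m) p u v" "length p \<le> 3" by blast
  moreover have "gdist (Kbip_V n m) (Kbip_E n m) u v \<le> length p - 1"
    by (rule gdist_le) (use calculation(1) in \<open>auto simp: is_path_def\<close>)
  ultimately show ?thesis by linarith
qed

lemma Kbip_geodetic_card_ge:
  assumes seg: "strong_edge_geodetic (Kbip_V n m) (Kbip_E n m) S" and nm: "2 \<le> m" "m \<le> n"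
  shows "n + (m - odd_below n) \<le> card S"
proof -
  obtain f where SV: "S \<subseteq> Kbip_V n m" and cov: "geodesic_cover (Kbip_V n m) (Kbip_E n m) S f"
    using seg by (auto simp: strong_edge_geodetic_iff)
  have diam: "\<forall>u\<in>S. \<forall>v\<in>S. gdist (Kbip_V n m) (Kbip_E n m) u v \<le> 2"
    using Kbip_gdist_le_2 SV nm by (meson in_mono le_trans one_le_numeral)
  define T where "T = Kbip_V n m - S"
  have card_ST: "card S + card T = n + m"
    using card_Diff_subset[OF finite_subset[OF SV finite_Kbip_V] SV] card_mono[OF finite_Kbip_V SV]
    by (simp add: T_def card_Kbip_V)
  have TS: "T \<inter> S = {}" by (auto simp: T_def)
  have "(\<forall>i<n. Inl i \<in> S) \<or> (\<forall>j<m. Inr j \<in> S)"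
    using geodesic_cover_edge_hits[OF cov diam] Kbip_E_Inl_Inr_iff by blast
  then show ?thesis
  proof
    assume left: "\<forall>i<n. Inl i \<in> S"
    define A :: "(nat + nat) set" where "A = Inl ` {..<n}"
    have "card T * ((card A + 1) div 2) \<le> card A choose 2"
      using left unfolding A_def by (intro geodesic_cover_middle_count[OF cov diam _ TS])
        (auto simp: T_def Kbip_V_def dest: Kbip_E_Inr)
    then have "card T \<le> odd_below n" using nm by (intro le_odd_below) (auto simp: A_def card_image)
    moreover have "card A \<le> card S"
      using left by (intro card_mono[OF finite_subset[OF SV finite_Kbip_V]]) (auto simp: A_def)
    ultimately show ?thesis using card_ST by (simp add: A_def card_image)
  next
    assume right: "\<forall>j<m. Inr j \<in> S"
    define A :: "(nat + nat) set" where "A = Inr ` {..<m}"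
    have "card T * ((card A + 1) div 2) \<le> card A choose 2"
      using right unfolding A_def by (intro geodesic_cover_middle_count[OF cov diam _ TS])
        (auto simp: T_def Kbip_V_def insert_commute dest: Kbip_E_Inl)
    then have "card T \<le> odd_below m" using nm by (intro le_odd_below) (auto simp: A_def card_image)
    then show ?thesis using card_ST odd_below_mono[OF nm(2)] odd_below_le[of m] by linarith
  qed
qed

text \<open>For odd \<open>q\<close>, each colour class \<open>c < q\<close> is a perfect matching of \<open>{0..q}\<close>: pairs with
  \<open>a + b \<equiv> c (mod q)\<close>, and \<open>q\<close> matched with the \<open>a\<close> satisfying \<open>2a \<equiv> c\<close>. An extra vertex
  \<open>q + 1\<close> is matched with \<open>c\<close>.\<close>

definition pair_colour :: "nat \<Rightarrow> nat \<Rightarrow> nat \<Rightarrow> nat option" where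
  "pair_colour q a b =
     (if b < q then Some ((a + b) mod q) else if b = q then Some (2 * a mod q)
      else if a < q then Some a else None)"

lemma pair_colour_covers:
  assumes q: "odd q" "q < n" "n \<le> q + 2" and x: "x < n" and c: "c < q"
  shows "\<exists>x'<n. x' \<noteq> x \<and> pair_colour q (min x x') (max x x') = Some c"
proof -
  consider "x < q" | "x = q" | "x = q + 1" using q x by linarith
  then show ?thesis
  proof cases
    case 1
    define y where "y = (c + q - x) mod q"
    have y: "y < q" "(x + y) mod q = c"
      using 1 c by (simp_all add: y_def mod_add_right_eq)
    show ?thesis
    proof (cases "y = x")
      case True
      then show ?thesis using 1 y q by (intro exI[of _ q]) (auto simp: pair_colour_def mult_2)
    next
      case False
      then show ?thesis using 1 y q by (intro exI[of _ y]) (auto simp: pair_colour_def min_def max_def add.commute)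
    qed
  next
    case 2
    define i where "i = c * ((q + 1) div 2) mod q"
    have "2 * i mod q = c * (2 * ((q + 1) div 2)) mod q"
      by (simp add: i_def mod_mult_right_eq mult.left_commute)
    also have "2 * ((q + 1) div 2) = q + 1" using q(1) by presburger
    finally have "2 * i mod q = c" using c by simp
    moreover have "i < q" using c by (simp add: i_def)
    ultimately show ?thesis using 2 q by (intro exI[of _ i]) (auto simp: pair_colour_def)
  next
    case 3
    then show ?thesis using q c by (intro exI[of _ c]) (auto simp: pair_colour_def)
  qed
qed

definition Kbip_geodesic :: "nat \<Rightarrow> nat \<Rightarrow> (nat + nat) set \<Rightarrow> (nat + nat) list option" where
  "Kbip_geodesic n m s =
     (let L = {i. Inl i \<in> s}; R = {j. Inr j \<in> s} in
      if card L = 2 then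
        (case pair_colour (odd_below n) (Min L) (Max L) of
           Some c \<Rightarrow> if c < m then Some [Inl (Min L), Inr c, Inl (Max L)] else None
         | None \<Rightarrow> None)
      else if card L = 1 \<and> card R = 1 then Some [Inl (the_elem L), Inr (the_elem R)]
      else None)"

lemma Kbip_geodesic_Inl_Inl:
  assumes "a < b"
  shows "Kbip_geodesic n m {Inl a, Inl b} =
    (case pair_colour (odd_below n) a b of
       Some c \<Rightarrow> if c < m then Some [Inl a, Inr c, Inl b] else None
     | None \<Rightarrow> None)"
proof -
  have "{i. Inl i \<in> {Inl a, Inl b :: nat + nat}} = {a, b}" by auto
  moreover have "Min {a, b} = a" "Max {a, b} = b" using assms by auto
  ultimately show ?thesis using assms by (simp only: Kbip_geodesic_def Let_def) simp
qed

lemma Kbip_geodesic_Inl_Inr: "Kbip_geodesic n m {Inl a, Inr b} = Some [Inl a, Inr b]"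
proof -
  have "{i. Inl i \<in> {Inl a, Inr b}} = {a}" "{j. Inr j \<in> {Inl a, Inr b}} = {b}" by auto
  then show ?thesis by (simp add: Kbip_geodesic_def)
qed

lemma Kbip_geodesic_Inr_Inr: "Kbip_geodesic n m {Inr a, Inr b} = None"
proof -
  have "{i. Inl i \<in> {Inr a, Inr b}} = {}" by auto
  then show ?thesis by (simp add: Kbip_geodesic_def)
qed

lemma Kbip_shortest_path_Inl_Inr:
  assumes "i < n" "j < m"
  shows "shortest_path (Kbip_V n m) (Kbip_E n m) [Inl i, Inr j] (Inl i) (Inr j)"
proof -
  have p: "is_path (Kbip_V n m) (Kbip_E n m) [Inl i, Inr j] (Inl i) (Inr j)"
    using assms by (intro is_path_two) auto
  have "gdist (Kbip_V n m) (Kbip_E n m) (Inl i) (Inr j) = 1"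
    by (rule gdist_eqI[OF p]) (auto dest: is_path_length_1)
  then show ?thesis using p by (simp add: shortest_path_def)
qed

lemma Kbip_shortest_path_Inl_Inl:
  assumes "i < n" "j < n" "c < m" "i \<noteq> j"
  shows "shortest_path (Kbip_V n m) (Kbip_E n m) [Inl i, Inr c, Inl j] (Inl i) (Inl j)"
proof -
  have p: "is_path (Kbip_V n m) (Kbip_E n m) [Inl i, Inr c, Inl j] (Inl i) (Inl j)"
    using assms by (intro is_path_three) (auto simp: insert_commute)
  have "2 \<le> k" if "is_path (Kbip_V n m) (Kbip_E n m) p' (Inl i) (Inl j)" "length p' = Suc k" for p' k
    using that is_path_length_1[OF that(1)] is_path_length_2[OF that(1)] Kbip_E_Inl_Inl assms(4)
    by (metis One_nat_def Suc_1 less_2_cases not_le Suc_inject sum.inject(1))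
  then have "gdist (Kbip_V n m) (Kbip_E n m) (Inl i) (Inl j) = 2"
    by (intro gdist_eqI[OF p]) auto
  then show ?thesis using p by (simp add: shortest_path_def)
qed

lemma Kbip_geodesic_shortest:
  assumes "u \<in> Kbip_V n m" "v \<in> Kbip_V n m" "u \<noteq> v" and p: "Kbip_geodesic n m {u, v} = Some p"
  shows "shortest_path (Kbip_V n m) (Kbip_E n m) p u v \<or> shortest_path (Kbip_V n m) (Kbip_E n m) p v u"
proof -
  have left: "shortest_path (Kbip_V n m) (Kbip_E n m) p (Inl a) (Inl b)"
    if "a < b" "b < n" "Kbip_geodesic n m {Inl a, Inl b} = Some p" for a b
    using that Kbip_shortest_path_Inl_Inl[of a n b _ m]
    by (auto simp: Kbip_geodesic_Inl_Inl split: option.splits if_splits)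
  show ?thesis
  proof (cases u; cases v)
    fix a b assume "u = Inl a" "v = Inl b"
    then show ?thesis using assms left[of a b] left[of b a]
      by (cases a b rule: linorder_cases) (auto simp: insert_commute)
  next
    fix a b assume "u = Inl a" "v = Inr b"
    then show ?thesis using assms Kbip_shortest_path_Inl_Inr[of a n b m]
      by (auto simp: Kbip_geodesic_Inl_Inr)
  next
    fix a b assume "u = Inr a" "v = Inl b"
    then show ?thesis using assms Kbip_shortest_path_Inl_Inr[of b n a m]
      by (auto simp: Kbip_geodesic_Inl_Inr insert_commute)
  next
    fix a b assume "u = Inr a" "v = Inr b"
    then show ?thesis using p by (simp add: Kbip_geodesic_Inr_Inr)
  qed
qed

definition Kbip_geodetic_set :: "nat \<Rightarrow> nat \<Rightarrow> (nat + nat) set" where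
  "Kbip_geodetic_set n m = Inl ` {..<n} \<union> Inr ` {odd_below n..<m}"

lemma card_Kbip_geodetic_set: "card (Kbip_geodetic_set n m) = n + (m - odd_below n)"
  unfolding Kbip_geodetic_set_def by (subst card_Un_disjoint) (auto simp: card_image)

lemma Kbip_geodesics_cover_edges:
  assumes "2 \<le> n" "e \<in> Kbip_E n m"
  shows "\<exists>u\<in>Kbip_geodetic_set n m. \<exists>v\<in>Kbip_geodetic_set n m. \<exists>p.
           u \<noteq> v \<and> Kbip_geodesic n m {u, v} = Some p \<and> e \<in> path_edges p"
proof -
  obtain i j where e: "e = {Inl i, Inr j}" "i < n" "j < m"
    using assms(2) by (auto simp: Kbip_E_def)
  show ?thesis
  proof (cases "j < odd_below n")
    case False
    then show ?thesis using e
      by (intro bexI[of _ "Inl i"] bexI[of _ "Inr j"] exI[of _ "[Inl i, Inr j]"])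
        (auto simp: Kbip_geodesic_Inl_Inr path_edges_two Kbip_geodetic_set_def)
  next
    case True
    have "odd (odd_below n)" "odd_below n < n" "n \<le> odd_below n + 2"
      using assms(1) by (auto simp: odd_below_def)
    then obtain i' where i': "i' < n" "i' \<noteq> i" "pair_colour (odd_below n) (min i i') (max i i') = Some j"
      using pair_colour_covers e(2) True by blast
    define a b where "a = min i i'" and "b = max i i'"
    have ab: "a < b" "b < n" "i = a \<or> i = b" using i' e unfolding a_def b_def by auto
    have "Kbip_geodesic n m {Inl a, Inl b} = Some [Inl a, Inr j, Inl b]"
      using Kbip_geodesic_Inl_Inl[OF ab(1), of n m] i'(3) e(3) unfolding a_def b_def by simp
    moreover have "e \<in> path_edges [Inl a, Inr j, Inl b]"
      using ab(3) e(1) by (auto simp: path_edges_three insert_commute)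
    ultimately show ?thesis using ab
      by (intro bexI[of _ "Inl a"] bexI[of _ "Inl b"] exI[of _ "[Inl a, Inr j, Inl b]"])
        (auto simp: Kbip_geodetic_set_def)
  qed
qed

lemma strong_edge_geodetic_Kbip_geodetic_set:
  assumes "2 \<le> n"
  shows "strong_edge_geodetic (Kbip_V n m) (Kbip_E n m) (Kbip_geodetic_set n m)"
proof -
  have "Kbip_geodetic_set n m \<subseteq> Kbip_V n m"
    by (auto simp: Kbip_geodetic_set_def Kbip_V_def)
  moreover have "geodesic_cover (Kbip_V n m) (Kbip_E n m) (Kbip_geodetic_set n m) (Kbip_geodesic n m)"
    unfolding geodesic_cover_def
    using Kbip_geodesic_shortest Kbip_geodesics_cover_edges[OF assms] calculation by blast
  ultimately show ?thesis by (auto simp: strong_edge_geodetic_iff)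
qed

lemma sge_number_eqI:
  assumes "finite V" "strong_edge_geodetic V E S"
    and "\<And>S'. strong_edge_geodetic V E S' \<Longrightarrow> card S \<le> card S'"
  shows "sge_number V E = card S"
  unfolding sge_number_def
proof (rule Min_eqI)
  have "{S. strong_edge_geodetic V E S} \<subseteq> Pow V" by (auto simp: strong_edge_geodetic_def)
  then show "finite (card ` {S. strong_edge_geodetic V E S})"
    using assms(1) by (meson finite_Pow_iff finite_imageI finite_subset)
qed (use assms in auto)

lemma sge_number_Kbip:
  assumes "2 \<le> m" "m \<le> n"
  shows "sge_number (Kbip_V n m) (Kbip_E n m) = n + (m - odd_below n)"
  using sge_number_eqI[OF finite_Kbip_V strong_edge_geodetic_Kbip_geodetic_set]
    Kbip_geodetic_card_ge[OF _ assms] card_Kbip_geodetic_set assms by simp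

theorem mainTheorem1:
  fixes n m :: nat
  assumes "m \<ge> 2" and "n \<ge> m"
  shows "(even n \<longrightarrow>
            (n = m \<longrightarrow> sge_number (Kbip_V n m) (Kbip_E n m) = n + 1) \<and>
            (n \<ge> m + 1 \<longrightarrow> sge_number (Kbip_V n m) (Kbip_E n m) = n)) \<and>
         (odd n \<longrightarrow>
            (n = m \<longrightarrow> sge_number (Kbip_V n m) (Kbip_E n m) = n + 2) \<and>
            (n = m + 1 \<longrightarrow> sge_number (Kbip_V n m) (Kbip_E n m) = n + 1) \<and>
            (n \<ge> m + 2 \<longrightarrow> sge_number (Kbip_V n m) (Kbip_E n m) = n))"
  using sge_number_Kbip[OF assms] odd_below_even[of n] odd_below_odd[of n] assms by auto

end
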